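(* Consider a finite population of $N$ units $i=1,\dots,N$ observed over two experiment iterations $t=1,2$. Each unit has a treatment path $\mathbf{Z}_i=(Z_{i,1},Z_{i,2})\in\{(c,c),(c,v_2),(v_1,v_2)\}$, where $c$ is control, $v_1$ is the treatment version used in iteration 1 and $v_2$ is the (possibly modified) version used in iteration 2. Each unit has fixed (non-random) potential outcomes $Y_{i,1}(z_1)$ for $z_1\in\{c,v_1,v_2\}$ and $Y_{i,2}(z_1,z_2)$ for $(z_1,z_2)\in\{(c,c),(c,v_2),(v_1,v_2)\}$. Assume the time-invariant control effect: $Y_{i,2}(c,v)-Y_{i,2}(c,c)=Y_{i,1}(v)-Y_{i,1}(c)$ for all $i$ and $v\in\{v_1,v_2\}$. Let fixed positive integers $N_{v_1},N_{c,v_2},N_{c,c}$ with $N_{v_1}+N_{c,v_2}+N_{c,c}=N$ be given (so that the iteration-1 treated proportion $p_1=N_{v_1}/N$ is strictly smaller than the iteration-2 treated proportion $p_2=(N_{v_1}+N_{c,v_2})/N$). The assignment is a two-iteration stepped-wedge completely randomized design: in iteration 1 a uniformly random set of $N_{v_1}$ units receives $v_1$ (and these units receive $v_2$ in iteration 2), and in iteration 2 a uniformly random subset of $N_{c,v_2}$ of the remaining units is moved from control to $v_2$; the other $N_{c,c}$ units stay in control in both iterations. The observed outcomes are $Y_{i,1}^{\mathrm{obs}}=Y_{i,1}(Z_{i,1})$ and $Y_{i,2}^{\mathrm{obs}}=Y_{i,2}(Z_{i,1},Z_{i,2})$. Define the population value of iterative experimentation $\tau_1=\frac1N\sum_{i=1}^N[Y_{i,1}(v_2)-Y_{i,1}(v_1)]$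 and the estimator $$\hat\tau_1=\frac{1}{N_{c,v_2}}\sum_{i=1}^N Y_{i,2}^{\mathrm{obs}}\mathbb{1}(\mathbf{Z}_i=(c,v_2))-\frac{1}{N_{v_1}}\sum_{i=1}^N Y_{i,1}^{\mathrm{obs}}\mathbb{1}(Z_{i,1}=v_1)-\frac{1}{N_{c,c}}\sum_{i=1}^N\big[Y_{i,2}^{\mathrm{obs}}-Y_{i,1}^{\mathrm{obs}}\big]\mathbb{1}(\mathbf{Z}_i=(c,c)).$$ Then $\mathbb{E}[\hat\tau_1]=\tau_1$ and $$\mathbb{V}[\hat\tau_1]=\frac{1}{N_{c,v_2}}S^2_{c,v_2}+\frac{1}{N_{v_1}}S^2_{v_1}+\frac{1}{N_{c,c}}S^2_{\Delta}-\frac1N S^2_\tau,$$ where, writing $\bar Y_2(c,v_2)=\frac1N\sum_i Y_{i,2}(c,v_2)$, $\bar Y_1(v_1)=\frac1N\sum_iY_{i,1}(v_1)$, $\bar Y_2(c,c)=\frac1N\sum_iY_{i,2}(c,c)$, $\bar Y_1(c)=\frac1N\sum_iY_{i,1}(c)$, $S^2_{c,v_2}=\frac{1}{N-1}\sum_i[Y_{i,2}(c,v_2)-\bar Y_2(c,v_2)]^2$, $S^2_{v_1}=\frac{1}{N-1}\sum_i[Y_{i,1}(v_1)-\bar Y_1(v_1)]^2$, $S^2_\Delta=\frac{1}{N-1}\sum_i[(Y_{i,2}(c,c)-Y_{i,1}(c))-(\bar Y_2(c,c)-\bar Y_1(c))]^2$, and $S^2_\tau=\frac{1}{N-1}\s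um_i[Y_{i,2}(c,v_2)-Y_{i,1}(v_1)-(Y_{i,2}(c,c)-Y_{i,1}(c))-\tau_1]^2$.
   Context: Expectations and variances are over the random assignment only; potential outcomes are fixed (finite-population, design-based framework). Writing potential outcomes as $Y_{i,1}(Z_{i,1})$ and $Y_{i,2}(Z_{i,1},Z_{i,2})$ encodes the paper's non-anticipation (iteration-1 outcomes do not depend on iteration-2 assignments) and no-interference (outcomes depend only on the unit's own path) assumptions. $Y_{i,1}(v_2)$ is a hypothetical potential outcome (the outcome had the final version been available in iteration 1). Under the time-invariant control effect, $\tau_1=\frac1N\sum_i[Y_{i,2}(c,v_2)-Y_{i,1}(v_1)-(Y_{i,2}(c,c)-Y_{i,1}(c))]$. *)

theory Defs
  imports "HOL-Probability.Probability"
begin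

datatype trt = C | V1 | V2

text \<open>An assignment is a pair (A,B): A = units treated with v1 in iteration 1
  (path (v1,v2)), B = units moved from control to v2 in iteration 2 (path (c,v2)).
  All other units have path (c,c).\<close>

definition Z1 :: "nat set \<times> nat set \<Rightarrow> nat \<Rightarrow> trt" where
  "Z1 AB i = (if i \<in> fst AB then V1 else C)"

definition Z2 :: "nat set \<times> nat set \<Rightarrow> nat \<Rightarrow> trt" where
  "Z2 AB i = (if i \<in> fst AB \<union> snd AB then V2 else C)"

definition sw_design :: "nat \<Rightarrow> nat \<Rightarrow> nat \<Rightarrow> (nat set \<times> nat set) pmf" where
  "sw_design N Nv1 Ncv2 =
     pmf_of_set {A. A \<subseteq> {..<N} \<and> card A = Nv1} \<bind> (\<lambda>A.
     pmf_of_set {B. B \<subseteq> {..<N} - A \<and> card B = Ncv2} \<bind> (\<lambda>B.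
     return_pmf (A, B)))"

definition Y1obs :: "(nat \<Rightarrow> trt \<Rightarrow> real) \<Rightarrow> nat set \<times> nat set \<Rightarrow> nat \<Rightarrow> real" where
  "Y1obs Y1 AB i = Y1 i (Z1 AB i)"

definition Y2obs :: "(nat \<Rightarrow> trt \<Rightarrow> trt \<Rightarrow> real) \<Rightarrow> nat set \<times> nat set \<Rightarrow> nat \<Rightarrow> real" where
  "Y2obs Y2 AB i = Y2 i (Z1 AB i) (Z2 AB i)"

definition ind :: "bool \<Rightarrow> real" where
  "ind b = (if b then 1 else 0)"

definition tau1 :: "nat \<Rightarrow> (nat \<Rightarrow> trt \<Rightarrow> real) \<Rightarrow> real" where
  "tau1 N Y1 = (1 / real N) * (\<Sum>i<N. Y1 i V2 - Y1 i V1)"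

definition tau1_hat ::
  "nat \<Rightarrow> nat \<Rightarrow> nat \<Rightarrow> nat \<Rightarrow> (nat \<Rightarrow> trt \<Rightarrow> real) \<Rightarrow> (nat \<Rightarrow> trt \<Rightarrow> trt \<Rightarrow> real)
     \<Rightarrow> nat set \<times> nat set \<Rightarrow> real" where
  "tau1_hat N Nv1 Ncv2 Ncc Y1 Y2 AB =
     (1 / real Ncv2) * (\<Sum>i<N. Y2obs Y2 AB i * ind (Z1 AB i = C \<and> Z2 AB i = V2))
   - (1 / real Nv1) * (\<Sum>i<N. Y1obs Y1 AB i * ind (Z1 AB i = V1))
   - (1 / real Ncc) * (\<Sum>i<N. (Y2obs Y2 AB i - Y1obs Y1 AB i) * ind (Z1 AB i = C \<and> Z2 AB i = C))"

definition S2 :: "nat \<Rightarrow> (nat \<Rightarrow> real) \<Rightarrow> real" where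
  "S2 N x = (1 / (real N - 1)) * (\<Sum>i<N. (x i - (1 / real N) * (\<Sum>j<N. x j))\<^sup>2)"

end

theory Submission
  imports Defs
begin

text \<open>
  Write a, b, d for the potential-outcome vectors Y2(c,v2), Y1(v1) and Y2(c,c) - Y1(c), and
  a', b', d' for their deviations from the population means. Since the control group is the
  complement of A and B, the estimator equals mean a - mean b - mean d plus the contrast
  (sum over B of e) - (sum over A of g), where e = a'/Ncv2 + d'/Ncc and g = b'/Nv1 - d'/Ncc both
  sum to zero over the population. Time invariance of the control effect is needed only to
  identify mean a - mean b - mean d with tau1.

  Given A, the set B is a simple random sample from the complement of A, so both moments of the
  contrast follow from those of a sample sum: a uniformly random k-subset of an N-set contains a
  given unit with probability k/N and a given pair of units with probability k(k-1)/(N(N-1)).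
  Averaging first over B and then over A gives the variance
  (Ncv2 (N - Ncv2) sum e^2 + 2 Nv1 Ncv2 sum e g + Nv1 (N - Nv1) sum g^2) / (N (N - 1)),
  which rearranges unit by unit into the Neyman form.
\<close>

abbreviation subsets :: "'a set \<Rightarrow> nat \<Rightarrow> 'a set set" where
  "subsets U k \<equiv> {A. A \<subseteq> U \<and> card A = k}"

definition avg :: "'a set \<Rightarrow> ('a \<Rightarrow> real) \<Rightarrow> real" where
  "avg S f = sum f S / real (card S)"

lemma avg_add: "avg S (\<lambda>x. f x + g x) = avg S f + avg S g"
  by (simp add: avg_def sum.distrib add_divide_distrib)

lemma avg_diff: "avg S (\<lambda>x. f x - g x) = avg S f - avg S g"
  by (simp add: avg_def sum_subtractf diff_divide_distrib)

lemma avg_cmult: "avg S (\<lambda>x. c * f x) = c * avg S f"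
  by (simp add: avg_def sum_distrib_left[symmetric])

lemma avg_const: "S \<noteq> {} \<Longrightarrow> finite S \<Longrightarrow> avg S (\<lambda>x. c) = c"
  by (simp add: avg_def)

lemma avg_cong: "(\<And>x. x \<in> S \<Longrightarrow> f x = g x) \<Longrightarrow> avg S f = avg S g"
  by (simp add: avg_def cong: sum.cong)

lemma finite_subsets: "finite U \<Longrightarrow> finite (subsets U k)"
  by (rule finite_subset[of _ "Pow U"]) auto

lemma subsets_nonempty: "finite U \<Longrightarrow> k \<le> card U \<Longrightarrow> subsets U k \<noteq> {}"
  using n_subsets[of U k] by (metis card.empty zero_less_binomial_iff less_irrefl)

lemma card_subsets_superset:
  assumes "finite U" "T \<subseteq> U" "card T \<le> k"
  shows "card {A \<in> subsets U k. T \<subseteq> A} = (card U - card T) choose (k - card T)"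
proof -
  have "finite T" using assms finite_subset by blast
  have "bij_betw (\<lambda>B. B \<union> T) (subsets (U - T) (k - card T)) {A \<in> subsets U k. T \<subseteq> A}"
  proof (rule bij_betw_byWitness[where f' = "\<lambda>A. A - T"])
    show "(\<lambda>B. B \<union> T) ` subsets (U - T) (k - card T) \<subseteq> {A \<in> subsets U k. T \<subseteq> A}"
    proof
      fix A assume "A \<in> (\<lambda>B. B \<union> T) ` subsets (U - T) (k - card T)"
      then obtain B where B: "B \<subseteq> U - T" "card B = k - card T" and A: "A = B \<union> T" by blast
      have "finite B" using B(1) assms(1) by (meson Diff_subset finite_subset)
      then have "card A = card B + card T"
        unfolding A using B(1) \<open>finite T\<close> by (intro card_Un_disjoint) auto
      then show "A \<in> {A \<in> subsets U k. T \<subseteq> A}"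
        using A B assms(2,3) by auto
    qed
    show "(\<lambda>A. A - T) ` {A \<in> subsets U k. T \<subseteq> A} \<subseteq> subsets (U - T) (k - card T)"
      using \<open>finite T\<close> by (auto simp: card_Diff_subset)
  qed auto
  then have "card {A \<in> subsets U k. T \<subseteq> A} = card (subsets (U - T) (k - card T))"
    by (simp add: bij_betw_same_card)
  also have "\<dots> = (card U - card T) choose (k - card T)"
    using assms \<open>finite T\<close> by (simp add: n_subsets card_Diff_subset)
  finally show ?thesis .
qed

lemma card_subsets_containing:
  assumes "finite U" "i \<in> U"
  shows "card U * card {A \<in> subsets U k. i \<in> A} = k * (card U choose k)"
proof (cases k)
  case 0
  have "A = {}" if "A \<subseteq> U" "card A = 0" for A
    using that assms(1) by (metis card_0_eq finite_subset)
  then have empty: "{A \<in> subsets U 0. i \<in> A} = {}"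
    by blast
  show ?thesis unfolding 0 empty by simp
next
  case (Suc k')
  have "{A \<in> subsets U k. i \<in> A} = {A \<in> subsets U k. {i} \<subseteq> A}" by auto
  then have "card {A \<in> subsets U k. i \<in> A} = (card U - 1) choose k'"
    using card_subsets_superset[of U "{i}" k] assms Suc by simp
  then show ?thesis using Suc binomial_absorption[of k' "card U"] by simp
qed

lemma card_subsets_containing_pair:
  assumes "finite U" "i \<in> U" "j \<in> U" "i \<noteq> j"
  shows "card U * (card U - 1) * card {A \<in> subsets U k. i \<in> A \<and> j \<in> A}
           = k * (k - 1) * (card U choose k)"
proof (cases "k < 2")
  case True
  have "2 \<le> card A" if "A \<subseteq> U" "i \<in> A" "j \<in> A" for A
  proof -
    have "card {i, j} \<le> card A"
      using that by (intro card_mono finite_subset[OF _ assms(1)]) auto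
    then show ?thesis using assms(4) by simp
  qed
  then have empty: "{A \<in> subsets U k. i \<in> A \<and> j \<in> A} = {}"
    using True by (auto simp: not_le[symmetric])
  have "k * (k - 1) = 0" using True by (cases k) simp_all
  then show ?thesis unfolding empty by simp
next
  case False
  then have "\<exists>k'. k = Suc (Suc k')" by presburger
  then obtain k' where k: "k = Suc (Suc k')" by blast
  have "{A \<in> subsets U k. i \<in> A \<and> j \<in> A} = {A \<in> subsets U k. {i, j} \<subseteq> A}" by auto
  moreover have two: "card {i, j} = 2" using assms(4) by simp
  ultimately have count: "card {A \<in> subsets U k. i \<in> A \<and> j \<in> A} = (card U - 2) choose k'"
    using card_subsets_superset[of U "{i, j}" k, unfolded two] assms k by simp
  have "k * (k - 1) * (card U choose k) = Suc k' * (Suc (Suc k') * (card U choose Suc (Suc k')))"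
    unfolding k by (simp only: diff_Suc_1 mult.commute mult.left_commute)
  also have "\<dots> = card U * (Suc k' * ((card U - 1) choose Suc k'))"
    unfolding binomial_absorption[of "Suc k'" "card U"] by (rule mult.left_commute)
  also have "\<dots> = card U * (card U - 1) * ((card U - 2) choose k')"
    using binomial_absorption[of k' "card U - 1"] by (simp add: numeral_2_eq_2)
  finally show ?thesis unfolding count by (rule sym)
qed

lemma sum_sum_swap_card:
  fixes f :: "'b \<Rightarrow> 'c::comm_semiring_1"
  assumes "finite V" "finite S" "\<And>A. A \<in> S \<Longrightarrow> g A \<subseteq> V"
  shows "(\<Sum>A\<in>S. \<Sum>v\<in>g A. f v) = (\<Sum>v\<in>V. f v * of_nat (card {A \<in> S. v \<in> g A}))"
proof -
  have "(\<Sum>A\<in>S. \<Sum>v\<in>g A. f v) = (\<Sum>A\<in>S. \<Sum>v\<in>{v \<in> V. v \<in> g A}. f v)"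
    using assms(3) by (intro sum.cong) auto
  also have "\<dots> = (\<Sum>v\<in>V. \<Sum>A\<in>{A \<in> S. v \<in> g A}. f v)"
    using assms(2,1) by (rule sum.swap_restrict)
  finally show ?thesis by (simp add: mult.commute)
qed

lemma avg_subsets_sum:
  assumes "finite U" "k \<le> card U"
  shows "avg (subsets U k) (\<lambda>A. \<Sum>i\<in>A. x i) = real k / real (card U) * (\<Sum>i\<in>U. x i)"
proof -
  let ?C = "real (card U choose k)"
  have count: "real (card {A \<in> subsets U k. i \<in> A}) = real k / real (card U) * ?C" if "i \<in> U" for i
  proof -
    have "card U > 0" using assms(1) that card_gt_0_iff by blast
    then show ?thesis
      using arg_cong[OF card_subsets_containing[OF assms(1) that, of k], of real]
      by (simp add: field_simps)
  qed
  have "(\<Sum>A\<in>subsets U k. \<Sum>i\<in>A. x i) = (\<Sum>i\<in>U. x i * real (card {A \<in> subsets U k. i \<in> A}))"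
    using assms(1) by (intro sum_sum_swap_card finite_subsets) auto
  also have "\<dots> = (\<Sum>i\<in>U. real k / real (card U) * ?C * x i)"
    by (rule sum.cong) (simp_all only: count mult.commute)
  also have "\<dots> = real k / real (card U) * ?C * (\<Sum>i\<in>U. x i)"
    by (rule sum_distrib_left[symmetric])
  finally show ?thesis
    using assms by (simp add: avg_def n_subsets)
qed

lemma avg_subsets_sum_product:
  assumes "finite U" "k \<le> card U"
  shows "avg (subsets U k) (\<lambda>A. (\<Sum>i\<in>A. x i) * (\<Sum>i\<in>A. y i))
    = (real k / real (card U) - real k * (real k - 1) / (real (card U) * (real (card U) - 1)))
        * (\<Sum>i\<in>U. x i * y i)
      + real k * (real k - 1) / (real (card U) * (real (card U) - 1)) * (\<Sum>i\<in>U. x i) * (\<Sum>i\<in>U. y i)"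
    (is "_ = (?p - ?q) * _ + ?q * _ * _")
proof -
  let ?C = "real (card U choose k)"
  have count: "real (card {A \<in> subsets U k. (i, j) \<in> A \<times> A})
      = ?C * (?q + (if i = j then ?p - ?q else 0))" if "i \<in> U" "j \<in> U" for i j
  proof (cases "i = j")
    case True
    have "card U > 0" using assms(1) that card_gt_0_iff by blast
    then show ?thesis
      using True arg_cong[OF card_subsets_containing[OF assms(1) that(1), of k], of real]
      by (simp add: field_simps)
  next
    case False
    have "card {i, j} \<le> card U" using that assms(1) by (intro card_mono) auto
    then have "real (card U) \<noteq> 0" "real (card U) - 1 \<noteq> 0" using False by auto
    moreover have "real (card U - 1) = real (card U) - 1" using \<open>real (card U) \<noteq> 0\<close> by simp
    moreover have "real k * real (k - 1) = real k * (real k - 1)" by (cases k) auto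
    ultimately show ?thesis
      using False arg_cong[OF card_subsets_containing_pair[OF assms(1) that False, of k], of real]
      by (simp only: of_nat_mult) (simp add: field_simps)
  qed
  have "(\<Sum>A\<in>subsets U k. (\<Sum>i\<in>A. x i) * (\<Sum>i\<in>A. y i))
      = (\<Sum>A\<in>subsets U k. \<Sum>(i, j)\<in>A \<times> A. x i * y j)"
    by (simp add: sum_product sum.cartesian_product)
  also have "\<dots> = (\<Sum>(i, j)\<in>U \<times> U. x i * y j * real (card {A \<in> subsets U k. (i, j) \<in> A \<times> A}))"
    using assms(1) by (subst sum_sum_swap_card[where V = "U \<times> U"])
      (auto simp: finite_subsets case_prod_unfold mem_Times_iff)
  also have "\<dots> = (\<Sum>(i, j)\<in>U \<times> U. ?C * (?q * (x i * y j) + (?p - ?q) * (if i = j then x i * y j else 0)))"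
  proof (rule sum.cong[OF refl])
    fix v assume "v \<in> U \<times> U"
    then obtain i j where v: "v = (i, j)" "i \<in> U" "j \<in> U" by blast
    show "(case v of (i, j) \<Rightarrow> x i * y j * real (card {A \<in> subsets U k. (i, j) \<in> A \<times> A}))
      = (case v of (i, j) \<Rightarrow> ?C * (?q * (x i * y j) + (?p - ?q) * (if i = j then x i * y j else 0)))"
      unfolding v prod.case count[OF v(2,3)] by (simp add: algebra_simps)
  qed
  also have "\<dots> = ?C * (?q * (\<Sum>(i, j)\<in>U \<times> U. x i * y j)
                     + (?p - ?q) * (\<Sum>(i, j)\<in>U \<times> U. if i = j then x i * y j else 0))"
    by (simp only: case_prod_unfold sum_distrib_left sum.distrib[symmetric])
  also have "\<dots> = ?C * ((?p - ?q) * (\<Sum>i\<in>U. x i * y i) + ?q * (\<Sum>i\<in>U. x i) * (\<Sum>i\<in>U. y i))"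
    using assms(1) by (simp add: sum.cartesian_product[symmetric] sum_product algebra_simps)
  finally have "(\<Sum>A\<in>subsets U k. (\<Sum>i\<in>A. x i) * (\<Sum>i\<in>A. y i))
      = ?C * ((?p - ?q) * (\<Sum>i\<in>U. x i * y i) + ?q * (\<Sum>i\<in>U. x i) * (\<Sum>i\<in>U. y i))" .
  moreover have "card (subsets U k) = card U choose k" "?C \<noteq> 0"
    using assms by (simp_all add: n_subsets)
  ultimately show ?thesis by (simp add: avg_def)
qed

lemma avg_subsets_centered_product:
  assumes "finite U" "k \<le> card U" "(\<Sum>i\<in>U. x i) = 0"
  shows "avg (subsets U k) (\<lambda>A. (\<Sum>i\<in>A. x i) * (\<Sum>i\<in>A. y i))
    = (real k / real (card U) - real k * (real k - 1) / (real (card U) * (real (card U) - 1)))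
        * (\<Sum>i\<in>U. x i * y i)"
  using avg_subsets_sum_product[OF assms(1,2)] assms(3) by simp

lemma avg_square_diff_const:
  assumes "finite S" "S \<noteq> {}"
  shows "avg S (\<lambda>B. (f B - t)\<^sup>2) = avg S (\<lambda>B. f B * f B) - 2 * t * avg S f + t\<^sup>2"
proof -
  have "avg S (\<lambda>B. (f B - t)\<^sup>2) = avg S (\<lambda>B. f B * f B - (2 * t) * f B + t\<^sup>2)"
    by (rule avg_cong) (simp add: power2_eq_square algebra_simps)
  also have "\<dots> = avg S (\<lambda>B. f B * f B) - 2 * t * avg S f + t\<^sup>2"
    by (simp only: avg_add avg_diff avg_cmult avg_const[OF assms(2,1)])
  finally show ?thesis .
qed

lemma avg_subsets_complement_sum:
  assumes "finite U" "A \<subseteq> U" "k \<le> card (U - A)" "(\<Sum>i\<in>U. x i) = 0"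
  shows "avg (subsets (U - A) k) (\<lambda>B. \<Sum>i\<in>B. x i) = - (real k / real (card (U - A)) * (\<Sum>i\<in>A. x i))"
  using avg_subsets_sum[of "U - A" k x] assms by (simp add: sum_diff finite_subset)

lemma avg_subsets_complement_square:
  assumes "finite U" "A \<subseteq> U" "k \<le> card (U - A)" "(\<Sum>i\<in>U. x i) = 0"
  defines "m \<equiv> real (card (U - A))"
  shows "avg (subsets (U - A) k) (\<lambda>B. ((\<Sum>i\<in>B. x i) - t)\<^sup>2)
    = (real k / m - real k * (real k - 1) / (m * (m - 1))) * ((\<Sum>i\<in>U. (x i)\<^sup>2) - (\<Sum>i\<in>A. (x i)\<^sup>2))
      + real k * (real k - 1) / (m * (m - 1)) * (\<Sum>i\<in>A. x i)\<^sup>2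
      + 2 * (real k / m) * t * (\<Sum>i\<in>A. x i) + t\<^sup>2"
proof -
  have "finite (U - A)" "finite A" using assms(1,2) finite_subset by auto
  have "subsets (U - A) k \<noteq> {}"
    using \<open>finite (U - A)\<close> assms(3) by (rule subsets_nonempty)
  moreover have "finite (subsets (U - A) k)"
    using \<open>finite (U - A)\<close> by (rule finite_subsets)
  moreover have sums: "(\<Sum>i\<in>U - A. x i) = - (\<Sum>i\<in>A. x i)"
    "(\<Sum>i\<in>U - A. x i * x i) = (\<Sum>i\<in>U. (x i)\<^sup>2) - (\<Sum>i\<in>A. (x i)\<^sup>2)"
    using assms(1,2,4) \<open>finite A\<close> by (simp_all add: sum_diff power2_eq_square)
  ultimately show ?thesis
    unfolding avg_square_diff_const[OF \<open>finite (subsets (U - A) k)\<close> \<open>subsets (U - A) k \<noteq> {}\<close>]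
      avg_subsets_sum_product[OF \<open>finite (U - A)\<close> assms(3)]
      avg_subsets_complement_sum[OF assms(1-4)] sums
    by (simp add: m_def power2_eq_square algebra_simps)
qed

lemma card_complement_subsets:
  "A \<in> subsets {..<N} n \<Longrightarrow> card ({..<N} - A) = N - n"
  using finite_subset[of A "{..<N}"] by (simp add: card_Diff_subset)

lemma expectation_sw_design:
  assumes "n1 + n2 \<le> N"
  shows "measure_pmf.expectation (sw_design N n1 n2) f
    = avg (subsets {..<N} n1) (\<lambda>A. avg (subsets ({..<N} - A) n2) (\<lambda>B. f (A, B)))"
proof -
  let ?SA = "subsets {..<N} n1" and ?SB = "\<lambda>A. subsets ({..<N} - A) n2"
  have SB: "finite (?SB A)" "?SB A \<noteq> {}" if "A \<in> ?SA" for A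
  proof -
    have "card ({..<N} - A) = N - n1" using that by (rule card_complement_subsets)
    then show "?SB A \<noteq> {}" using assms by (intro subsets_nonempty) simp_all
    show "finite (?SB A)" by (intro finite_subsets) simp
  qed
  have SA: "?SA \<noteq> {}" "finite ?SA"
    using assms by (intro subsets_nonempty finite_subsets; simp)+
  have inner: "measure_pmf.expectation (pmf_of_set (?SB A) \<bind> (\<lambda>B. return_pmf (A, B))) f
      = avg (?SB A) (\<lambda>B. f (A, B))" if "A \<in> ?SA" for A
    using SB[OF that] by (subst pmf_expectation_bind_pmf_of_set)
      (auto simp: avg_def sum_divide_distrib divide_inverse_commute sum_distrib_left)
  have "measure_pmf.expectation (sw_design N n1 n2) f
      = (\<Sum>A\<in>?SA. measure_pmf.expectation (pmf_of_set (?SB A) \<bind> (\<lambda>B. return_pmf (A, B))) f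
           /\<^sub>R real (card ?SA))"
    unfolding sw_design_def using SA SB by (intro pmf_expectation_bind_pmf_of_set) simp_all
  also have "\<dots> = avg ?SA (\<lambda>A. avg (?SB A) (\<lambda>B. f (A, B)))"
    by (simp add: inner avg_def sum_divide_distrib divide_inverse_commute sum_distrib_left)
  finally show ?thesis .
qed

lemma expectation_sw_design_cong:
  fixes f g :: "nat set \<times> nat set \<Rightarrow> real"
  assumes "n1 + n2 \<le> N"
    and "\<And>A B. A \<in> subsets {..<N} n1 \<Longrightarrow> B \<in> subsets ({..<N} - A) n2 \<Longrightarrow> f (A, B) = g (A, B)"
  shows "measure_pmf.expectation (sw_design N n1 n2) f = measure_pmf.expectation (sw_design N n1 n2) g"
  unfolding expectation_sw_design[OF assms(1)] by (intro avg_cong) (simp add: assms(2))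

lemma variance_sw_design_cong:
  fixes f g :: "nat set \<times> nat set \<Rightarrow> real"
  assumes "n1 + n2 \<le> N"
    and "\<And>A B. A \<in> subsets {..<N} n1 \<Longrightarrow> B \<in> subsets ({..<N} - A) n2 \<Longrightarrow> f (A, B) = g (A, B)"
  shows "measure_pmf.variance (sw_design N n1 n2) f = measure_pmf.variance (sw_design N n1 n2) g"
proof -
  have "measure_pmf.expectation (sw_design N n1 n2) f = measure_pmf.expectation (sw_design N n1 n2) g"
    using assms by (rule expectation_sw_design_cong)
  then show ?thesis
    by (simp only:) (rule expectation_sw_design_cong[OF assms(1)], simp add: assms(2))
qed

lemma sw_design_weights:
  fixes n1 n2 w :: real
  assumes "0 \<le> n1" "2 \<le> w"
  defines "n \<equiv> n1 + w"
  shows "n1 / n - n1 * (n1 - 1) / (n * (n - 1)) = n1 * (n - n1) / (n * (n - 1))"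
    and "n2 / w * (n1 / n - n1 * (n1 - 1) / (n * (n - 1))) = n1 * n2 / (n * (n - 1))"
    and "(n2 / w - n2 * (n2 - 1) / (w * (w - 1))) * (1 - n1 / n)
         + n2 * (n2 - 1) / (w * (w - 1)) * (n1 / n - n1 * (n1 - 1) / (n * (n - 1)))
         = n2 * (n - n2) / (n * (n - 1))"
proof -
  have nz: "n \<noteq> 0" "n - 1 \<noteq> 0" "w \<noteq> 0" "w - 1 \<noteq> 0" using assms(1,2) unfolding n_def by auto
  show pq: "n1 / n - n1 * (n1 - 1) / (n * (n - 1)) = n1 * (n - n1) / (n * (n - 1))"
    using nz by (simp add: divide_simps) (simp add: algebra_simps)
  show "n2 / w * (n1 / n - n1 * (n1 - 1) / (n * (n - 1))) = n1 * n2 / (n * (n - 1))"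
    unfolding pq using nz by (simp add: divide_simps) (simp add: n_def algebra_simps)
  show "(n2 / w - n2 * (n2 - 1) / (w * (w - 1))) * (1 - n1 / n)
         + n2 * (n2 - 1) / (w * (w - 1)) * (n1 / n - n1 * (n1 - 1) / (n * (n - 1)))
         = n2 * (n - n2) / (n * (n - 1))"
    unfolding pq using nz by (simp add: divide_simps) (simp add: n_def algebra_simps)
qed

lemma expectation_sw_design_contrast:
  fixes x y :: "nat \<Rightarrow> real"
  assumes "n1 + n2 \<le> N" and "(\<Sum>i<N. x i) = 0" "(\<Sum>i<N. y i) = 0"
  shows "measure_pmf.expectation (sw_design N n1 n2) (\<lambda>(A, B). c + ((\<Sum>i\<in>B. x i) - (\<Sum>i\<in>A. y i))) = c"
proof -
  let ?SA = "subsets {..<N} n1" and ?SB = "\<lambda>A. subsets ({..<N} - A) n2"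
  define p2 where "p2 = real n2 / real (N - n1)"
  have SA: "?SA \<noteq> {}" "finite ?SA"
    using assms(1) by (intro subsets_nonempty finite_subsets; simp)+
  have inner: "avg (?SB A) (\<lambda>B. c + ((\<Sum>i\<in>B. x i) - (\<Sum>i\<in>A. y i)))
      = c + ((- p2) * (\<Sum>i\<in>A. x i) - (\<Sum>i\<in>A. y i))" if "A \<in> ?SA" for A
  proof -
    have "card ({..<N} - A) = N - n1" using that by (rule card_complement_subsets)
    then have "?SB A \<noteq> {}" "finite (?SB A)"
      using assms(1) by (intro subsets_nonempty finite_subsets; simp)+
    then show ?thesis
      using avg_subsets_complement_sum[of "{..<N}" A n2 x] \<open>card ({..<N} - A) = N - n1\<close> that assms
      by (simp add: avg_add avg_diff avg_const p2_def)
  qed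
  have "measure_pmf.expectation (sw_design N n1 n2) (\<lambda>(A, B). c + ((\<Sum>i\<in>B. x i) - (\<Sum>i\<in>A. y i)))
      = avg ?SA (\<lambda>A. c + ((- p2) * (\<Sum>i\<in>A. x i) - (\<Sum>i\<in>A. y i)))"
    unfolding expectation_sw_design[OF assms(1)] prod.case by (rule avg_cong) (rule inner)
  also have "\<dots> = c"
    using avg_subsets_sum[of "{..<N}" n1] assms
    by (simp only: avg_add avg_diff avg_cmult avg_const[OF SA]) simp
  finally show ?thesis .
qed

text \<open>p and q are the probabilities that a given unit, resp. a given pair of units, is drawn in
  the first stage (index 1, the set A) or in the second stage (index 2, the set B given A).\<close>

lemma expectation_sw_design_contrast_square_stagewise:
  fixes x y :: "nat \<Rightarrow> real"
  assumes "n1 + n2 \<le> N" and "(\<Sum>i<N. x i) = 0" "(\<Sum>i<N. y i) = 0"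
  defines "p1 \<equiv> real n1 / real N" and "q1 \<equiv> real n1 * (real n1 - 1) / (real N * (real N - 1))"
    and "p2 \<equiv> real n2 / (real N - real n1)"
    and "q2 \<equiv> real n2 * (real n2 - 1) / ((real N - real n1) * (real N - real n1 - 1))"
  shows "measure_pmf.expectation (sw_design N n1 n2) (\<lambda>(A, B). ((\<Sum>i\<in>B. x i) - (\<Sum>i\<in>A. y i))\<^sup>2)
    = ((p2 - q2) * (1 - p1) + q2 * (p1 - q1)) * (\<Sum>i<N. (x i)\<^sup>2)
      + 2 * (p2 * (p1 - q1)) * (\<Sum>i<N. x i * y i) + (p1 - q1) * (\<Sum>i<N. (y i)\<^sup>2)"
proof -
  let ?SA = "subsets {..<N} n1" and ?SB = "\<lambda>A. subsets ({..<N} - A) n2"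
  have SA: "?SA \<noteq> {}" "finite ?SA"
    using assms(1) by (intro subsets_nonempty finite_subsets; simp)+
  have inner: "avg (?SB A) (\<lambda>B. ((\<Sum>i\<in>B. x i) - (\<Sum>i\<in>A. y i))\<^sup>2)
      = (p2 - q2) * ((\<Sum>i<N. (x i)\<^sup>2) - (\<Sum>i\<in>A. (x i)\<^sup>2)) + q2 * ((\<Sum>i\<in>A. x i) * (\<Sum>i\<in>A. x i))
        + 2 * p2 * ((\<Sum>i\<in>A. y i) * (\<Sum>i\<in>A. x i)) + (\<Sum>i\<in>A. y i) * (\<Sum>i\<in>A. y i)"
    if "A \<in> ?SA" for A
    using avg_subsets_complement_square[of "{..<N}" A n2 x "\<Sum>i\<in>A. y i"]
      card_complement_subsets[OF that] that assms(1,2)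
    by (simp add: p2_def q2_def power2_eq_square algebra_simps)
  have outer: "avg ?SA (\<lambda>A. \<Sum>i\<in>A. z i) = p1 * (\<Sum>i<N. z i)"
    "avg ?SA (\<lambda>A. (\<Sum>i\<in>A. x i) * (\<Sum>i\<in>A. z i)) = (p1 - q1) * (\<Sum>i<N. x i * z i)"
    "avg ?SA (\<lambda>A. (\<Sum>i\<in>A. y i) * (\<Sum>i\<in>A. z i)) = (p1 - q1) * (\<Sum>i<N. y i * z i)" for z
    using assms(1-3) avg_subsets_sum[of "{..<N}" n1 z]
      avg_subsets_centered_product[of "{..<N}" n1 x z] avg_subsets_centered_product[of "{..<N}" n1 y z]
    by (simp_all add: p1_def q1_def)
  have "measure_pmf.expectation (sw_design N n1 n2) (\<lambda>(A, B). ((\<Sum>i\<in>B. x i) - (\<Sum>i\<in>A. y i))\<^sup>2)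
      = avg ?SA (\<lambda>A. (p2 - q2) * ((\<Sum>i<N. (x i)\<^sup>2) - (\<Sum>i\<in>A. (x i)\<^sup>2))
          + q2 * ((\<Sum>i\<in>A. x i) * (\<Sum>i\<in>A. x i))
          + 2 * p2 * ((\<Sum>i\<in>A. y i) * (\<Sum>i\<in>A. x i)) + (\<Sum>i\<in>A. y i) * (\<Sum>i\<in>A. y i))"
    unfolding expectation_sw_design[OF assms(1)] prod.case by (rule avg_cong) (rule inner)
  also have "\<dots> = ((p2 - q2) * (1 - p1) + q2 * (p1 - q1)) * (\<Sum>i<N. (x i)\<^sup>2)
        + 2 * (p2 * (p1 - q1)) * (\<Sum>i<N. x i * y i) + (p1 - q1) * (\<Sum>i<N. (y i)\<^sup>2)"
    by (simp only: avg_add avg_diff avg_cmult avg_const[OF SA] outer)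
      (simp add: power2_eq_square algebra_simps)
  finally show ?thesis .
qed

lemma expectation_sw_design_contrast_square:
  fixes x y :: "nat \<Rightarrow> real"
  assumes "0 < n2" "n1 + n2 < N" and "(\<Sum>i<N. x i) = 0" "(\<Sum>i<N. y i) = 0"
  shows "measure_pmf.expectation (sw_design N n1 n2) (\<lambda>(A, B). ((\<Sum>i\<in>B. x i) - (\<Sum>i\<in>A. y i))\<^sup>2)
      = (\<Sum>i<N. real n2 * (real N - real n2) * (x i)\<^sup>2 + 2 * real n1 * real n2 * (x i * y i)
                 + real n1 * (real N - real n1) * (y i)\<^sup>2) / (real N * (real N - 1))"
proof -
  define w where "w = real N - real n1"
  define p1 where "p1 = real n1 / real N"
  define q1 where "q1 = real n1 * (real n1 - 1) / (real N * (real N - 1))"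
  define p2 where "p2 = real n2 / w"
  define q2 where "q2 = real n2 * (real n2 - 1) / (w * (w - 1))"
  have "n1 + n2 \<le> N" using assms(2) by simp
  from expectation_sw_design_contrast_square_stagewise[OF this assms(3,4)]
  have stages: "measure_pmf.expectation (sw_design N n1 n2) (\<lambda>(A, B). ((\<Sum>i\<in>B. x i) - (\<Sum>i\<in>A. y i))\<^sup>2)
    = ((p2 - q2) * (1 - p1) + q2 * (p1 - q1)) * (\<Sum>i<N. (x i)\<^sup>2)
      + 2 * (p2 * (p1 - q1)) * (\<Sum>i<N. x i * y i) + (p1 - q1) * (\<Sum>i<N. (y i)\<^sup>2)"
    unfolding w_def p1_def q1_def p2_def q2_def .
  have "real (n1 + 2) \<le> real N"
    using assms(1,2) by (simp only: of_nat_le_iff)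
  then have weights: "p1 - q1 = real n1 * (real N - real n1) / (real N * (real N - 1))"
    "p2 * (p1 - q1) = real n1 * real n2 / (real N * (real N - 1))"
    "(p2 - q2) * (1 - p1) + q2 * (p1 - q1) = real n2 * (real N - real n2) / (real N * (real N - 1))"
    using sw_design_weights(1)[of "real n1" w] sw_design_weights(2,3)[of "real n1" w "real n2"]
    by (simp_all add: w_def p1_def q1_def p2_def q2_def)
  show ?thesis
    unfolding stages
    by (simp only: weights(2,3)) (simp add: weights(1) sum.distrib sum_distrib_left
        add_divide_distrib sum_divide_distrib mult.assoc)
qed

lemma variance_sw_design_contrast:
  fixes x y :: "nat \<Rightarrow> real"
  assumes "0 < n2" "n1 + n2 < N" and "(\<Sum>i<N. x i) = 0" "(\<Sum>i<N. y i) = 0"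
  shows "measure_pmf.variance (sw_design N n1 n2) (\<lambda>(A, B). c + ((\<Sum>i\<in>B. x i) - (\<Sum>i\<in>A. y i)))
      = (\<Sum>i<N. real n2 * (real N - real n2) * (x i)\<^sup>2 + 2 * real n1 * real n2 * (x i * y i)
                 + real n1 * (real N - real n1) * (y i)\<^sup>2) / (real N * (real N - 1))"
  unfolding expectation_sw_design_contrast[OF less_imp_le[OF assms(2)] assms(3,4)]
  using expectation_sw_design_contrast_square[OF assms] by (simp add: case_prod_unfold)

definition pop_mean :: "nat \<Rightarrow> (nat \<Rightarrow> real) \<Rightarrow> real" where
  "pop_mean N x = 1 / real N * (\<Sum>i<N. x i)"

lemma sum_centered: "0 < N \<Longrightarrow> (\<Sum>i<N. x i - pop_mean N x) = 0"
  by (simp add: pop_mean_def sum_subtractf)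

lemma S2_eq_centered: "S2 N x = 1 / (real N - 1) * (\<Sum>i<N. (x i - pop_mean N x)\<^sup>2)"
  by (simp add: S2_def pop_mean_def)

lemma sum_diff_const_divide:
  "finite S \<Longrightarrow> (\<Sum>i\<in>S. (x i - c) / k) = (\<Sum>i\<in>S. x i) / k - real (card S) * c / k"
  by (simp add: sum_subtractf sum_divide_distrib[symmetric] diff_divide_distrib)

lemma sum_if_mem_subset: "finite U \<Longrightarrow> S \<subseteq> U \<Longrightarrow> (\<Sum>i\<in>U. if i \<in> S then f i else 0) = sum f S"
  by (simp add: sum.inter_restrict[symmetric] Int_absorb1)

lemma tau1_hat_decomposition:
  fixes Y1 :: "nat \<Rightarrow> trt \<Rightarrow> real" and Y2 :: "nat \<Rightarrow> trt \<Rightarrow> trt \<Rightarrow> real"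
  assumes AB: "A \<subseteq> {..<N}" "card A = Nv1" "B \<subseteq> {..<N} - A" "card B = Ncv2"
    and sizes: "Nv1 + Ncv2 + Ncc = N" "0 < Nv1" "0 < Ncv2" "0 < Ncc"
  defines "a \<equiv> \<lambda>i. Y2 i C V2" and "b \<equiv> \<lambda>i. Y1 i V1" and "d \<equiv> \<lambda>i. Y2 i C C - Y1 i C"
  shows "tau1_hat N Nv1 Ncv2 Ncc Y1 Y2 (A, B)
    = pop_mean N a - pop_mean N b - pop_mean N d
      + ((\<Sum>i\<in>B. (a i - pop_mean N a) / Ncv2 + (d i - pop_mean N d) / Ncc)
         - (\<Sum>i\<in>A. (b i - pop_mean N b) / Nv1 - (d i - pop_mean N d) / Ncc))"
proof -
  have "B \<subseteq> {..<N}" using AB(3) by blast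
  have "finite A" "finite B" using AB(1,3) by (auto intro: finite_subset[of _ "{..<N}"])
  have treated_v2: "(\<Sum>i<N. Y2obs Y2 (A, B) i * ind (Z1 (A, B) i = C \<and> Z2 (A, B) i = V2)) = (\<Sum>i\<in>B. a i)"
  proof -
    have "(\<Sum>i<N. Y2obs Y2 (A, B) i * ind (Z1 (A, B) i = C \<and> Z2 (A, B) i = V2))
        = (\<Sum>i<N. if i \<in> B then a i else 0)"
      using AB by (intro sum.cong) (auto simp: Y2obs_def Z1_def Z2_def ind_def a_def)
    also have "\<dots> = (\<Sum>i\<in>B. a i)" using \<open>B \<subseteq> {..<N}\<close> by (simp add: sum_if_mem_subset)
    finally show ?thesis .
  qed
  have treated_v1: "(\<Sum>i<N. Y1obs Y1 (A, B) i * ind (Z1 (A, B) i = V1)) = (\<Sum>i\<in>A. b i)"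
  proof -
    have "(\<Sum>i<N. Y1obs Y1 (A, B) i * ind (Z1 (A, B) i = V1)) = (\<Sum>i<N. if i \<in> A then b i else 0)"
      by (intro sum.cong) (auto simp: Y1obs_def Z1_def ind_def b_def)
    also have "\<dots> = (\<Sum>i\<in>A. b i)" using AB(1) by (simp add: sum_if_mem_subset)
    finally show ?thesis .
  qed
  have control: "(\<Sum>i<N. (Y2obs Y2 (A, B) i - Y1obs Y1 (A, B) i) * ind (Z1 (A, B) i = C \<and> Z2 (A, B) i = C))
      = (\<Sum>i<N. d i) - (\<Sum>i\<in>A. d i) - (\<Sum>i\<in>B. d i)"
  proof -
    have "(\<Sum>i<N. (Y2obs Y2 (A, B) i - Y1obs Y1 (A, B) i) * ind (Z1 (A, B) i = C \<and> Z2 (A, B) i = C))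
        = (\<Sum>i<N. if i \<in> {..<N} - (A \<union> B) then d i else 0)"
      by (intro sum.cong) (auto simp: Y1obs_def Y2obs_def Z1_def Z2_def ind_def d_def)
    also have "\<dots> = (\<Sum>i\<in>{..<N} - (A \<union> B). d i)" by (rule sum_if_mem_subset) auto
    also have "\<dots> = (\<Sum>i<N. d i) - (\<Sum>i\<in>A \<union> B. d i)"
      using AB(1) \<open>B \<subseteq> {..<N}\<close> by (intro sum_diff) auto
    also have "(\<Sum>i\<in>A \<union> B. d i) = (\<Sum>i\<in>A. d i) + (\<Sum>i\<in>B. d i)"
      using AB(3) \<open>finite A\<close> \<open>finite B\<close> by (intro sum.union_disjoint) auto
    finally show ?thesis by simp
  qed
  have B_part: "(\<Sum>i\<in>B. (a i - pop_mean N a) / Ncv2 + (d i - pop_mean N d) / Ncc)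
      = (\<Sum>i\<in>B. a i) / Ncv2 - pop_mean N a + (\<Sum>i\<in>B. d i) / Ncc - Ncv2 * pop_mean N d / Ncc"
    using \<open>finite B\<close> AB(4) sizes(3) by (simp add: sum.distrib sum_diff_const_divide)
  have A_part: "(\<Sum>i\<in>A. (b i - pop_mean N b) / Nv1 - (d i - pop_mean N d) / Ncc)
      = (\<Sum>i\<in>A. b i) / Nv1 - pop_mean N b - (\<Sum>i\<in>A. d i) / Ncc + Nv1 * pop_mean N d / Ncc"
    using \<open>finite A\<close> AB(2) sizes(2) by (simp add: sum_subtractf sum_diff_const_divide)
  have "(\<Sum>i<N. d i) / Ncc = pop_mean N d + Nv1 * pop_mean N d / Ncc + Ncv2 * pop_mean N d / Ncc"
    using sizes by (auto simp: pop_mean_def field_simps)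
  then show ?thesis
    unfolding tau1_hat_def treated_v2 treated_v1 control B_part A_part
    by (simp add: diff_divide_distrib)
qed

lemma tau1_eq_pop_means:
  assumes "\<And>i. i < N \<Longrightarrow> Y2 i C V2 - Y2 i C C = Y1 i V2 - Y1 i C"
  shows "tau1 N Y1 = pop_mean N (\<lambda>i. Y2 i C V2) - pop_mean N (\<lambda>i. Y1 i V1)
                       - pop_mean N (\<lambda>i. Y2 i C C - Y1 i C)"
proof -
  have "(\<Sum>i<N. Y1 i V2 - Y1 i V1) = (\<Sum>i<N. Y2 i C V2 - Y1 i V1 - (Y2 i C C - Y1 i C))"
    using assms by (intro sum.cong) (auto simp: algebra_simps)
  then show ?thesis
    unfolding tau1_def pop_mean_def sum_subtractf by (simp only: right_diff_distrib)
qed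

lemma contrast_quadratic_form:
  fixes a b d n1 n2 n3 :: real
  assumes "n1 \<noteq> 0" "n2 \<noteq> 0" "n3 \<noteq> 0"
  defines "n \<equiv> n1 + n2 + n3"
  shows "n2 * (n - n2) * (a / n2 + d / n3)\<^sup>2 + 2 * n1 * n2 * ((a / n2 + d / n3) * (b / n1 - d / n3))
           + n1 * (n - n1) * (b / n1 - d / n3)\<^sup>2
         = n * (a\<^sup>2 / n2 + b\<^sup>2 / n1 + d\<^sup>2 / n3) - (a - b - d)\<^sup>2"
  using assms by (simp add: field_simps power2_eq_square)

lemma contrast_variance_eq_neyman:
  fixes a b d :: "nat \<Rightarrow> real"
  assumes "0 < n1" "0 < n2" "0 < n3" "n1 + n2 + n3 = N"
  shows "(\<Sum>i<N. real n2 * (real N - real n2) * (a i / n2 + d i / n3)\<^sup>2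
             + 2 * real n1 * real n2 * ((a i / n2 + d i / n3) * (b i / n1 - d i / n3))
             + real n1 * (real N - real n1) * (b i / n1 - d i / n3)\<^sup>2) / (real N * (real N - 1))
    = 1 / real n2 * (1 / (real N - 1) * (\<Sum>i<N. (a i)\<^sup>2))
      + 1 / real n1 * (1 / (real N - 1) * (\<Sum>i<N. (b i)\<^sup>2))
      + 1 / real n3 * (1 / (real N - 1) * (\<Sum>i<N. (d i)\<^sup>2))
      - 1 / real N * (1 / (real N - 1)) * (\<Sum>i<N. (a i - b i - d i)\<^sup>2)"
proof -
  have N: "real N = real n1 + real n2 + real n3" "real N \<noteq> 0" using assms by auto
  have "(\<Sum>i<N. real n2 * (real N - real n2) * (a i / n2 + d i / n3)\<^sup>2
             + 2 * real n1 * real n2 * ((a i / n2 + d i / n3) * (b i / n1 - d i / n3))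
             + real n1 * (real N - real n1) * (b i / n1 - d i / n3)\<^sup>2)
      = (\<Sum>i<N. real N * ((a i)\<^sup>2 / n2 + (b i)\<^sup>2 / n1 + (d i)\<^sup>2 / n3) - (a i - b i - d i)\<^sup>2)"
    unfolding N(1) using assms(1-3) by (intro sum.cong refl contrast_quadratic_form) simp_all
  also have "\<dots> = real N * ((\<Sum>i<N. (a i)\<^sup>2) / n2 + (\<Sum>i<N. (b i)\<^sup>2) / n1
                          + (\<Sum>i<N. (d i)\<^sup>2) / n3) - (\<Sum>i<N. (a i - b i - d i)\<^sup>2)"
    by (simp only: sum_subtractf sum.distrib sum_distrib_left[symmetric] sum_divide_distrib[symmetric])
  finally have sum_eq: "(\<Sum>i<N. real n2 * (real N - real n2) * (a i / n2 + d i / n3)\<^sup>2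
             + 2 * real n1 * real n2 * ((a i / n2 + d i / n3) * (b i / n1 - d i / n3))
             + real n1 * (real N - real n1) * (b i / n1 - d i / n3)\<^sup>2)
      = real N * ((\<Sum>i<N. (a i)\<^sup>2) / n2 + (\<Sum>i<N. (b i)\<^sup>2) / n1
                          + (\<Sum>i<N. (d i)\<^sup>2) / n3) - (\<Sum>i<N. (a i - b i - d i)\<^sup>2)" .
  show ?thesis
    unfolding sum_eq using N(2) by (simp add: diff_divide_distrib add_divide_distrib)
qed

lemma tau1_hat_moments:
  fixes Y1 :: "nat \<Rightarrow> trt \<Rightarrow> real" and Y2 :: "nat \<Rightarrow> trt \<Rightarrow> trt \<Rightarrow> real"
  assumes pos: "0 < Nv1" "0 < Ncv2" "0 < Ncc" and sum: "Nv1 + Ncv2 + Ncc = N"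
  defines "a \<equiv> \<lambda>i. Y2 i C V2" and "b \<equiv> \<lambda>i. Y1 i V1" and "d \<equiv> \<lambda>i. Y2 i C C - Y1 i C"
  defines "\<tau> \<equiv> pop_mean N a - pop_mean N b - pop_mean N d"
  shows "measure_pmf.expectation (sw_design N Nv1 Ncv2) (tau1_hat N Nv1 Ncv2 Ncc Y1 Y2) = \<tau>"
    and "measure_pmf.variance (sw_design N Nv1 Ncv2) (tau1_hat N Nv1 Ncv2 Ncc Y1 Y2)
      = 1 / real Ncv2 * S2 N a + 1 / real Nv1 * S2 N b + 1 / real Ncc * S2 N d
        - 1 / real N * (1 / (real N - 1)) * (\<Sum>i<N. (a i - b i - d i - \<tau>)\<^sup>2)"
proof -
  define a' b' d' where "a' = (\<lambda>i. a i - pop_mean N a)" and "b' = (\<lambda>i. b i - pop_mean N b)"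
    and "d' = (\<lambda>i. d i - pop_mean N d)"
  define X where
    "X = (\<lambda>(A, B). \<tau> + ((\<Sum>i\<in>B. a' i / Ncv2 + d' i / Ncc) - (\<Sum>i\<in>A. b' i / Nv1 - d' i / Ncc)))"
  have sizes: "0 < N" "Nv1 + Ncv2 < N" "Nv1 + Ncv2 \<le> N" using pos sum by auto
  have centered: "(\<Sum>i<N. a' i / Ncv2 + d' i / Ncc) = 0" "(\<Sum>i<N. b' i / Nv1 - d' i / Ncc) = 0"
    using sum_centered[OF sizes(1)] unfolding a'_def b'_def d'_def
    by (simp_all add: sum.distrib sum_subtractf sum_divide_distrib[symmetric])
  have decomp: "tau1_hat N Nv1 Ncv2 Ncc Y1 Y2 (A, B) = X (A, B)"
    if "A \<in> subsets {..<N} Nv1" "B \<in> subsets ({..<N} - A) Ncv2" for A B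
    using tau1_hat_decomposition[of A N Nv1 B Ncv2 Ncc Y1 Y2] that pos sum
    unfolding X_def \<tau>_def a_def b_def d_def a'_def b'_def d'_def by simp
  have expectation_eq: "measure_pmf.expectation (sw_design N Nv1 Ncv2) (tau1_hat N Nv1 Ncv2 Ncc Y1 Y2)
      = measure_pmf.expectation (sw_design N Nv1 Ncv2) X"
    using sizes(3) decomp by (rule expectation_sw_design_cong)
  have variance_eq: "measure_pmf.variance (sw_design N Nv1 Ncv2) (tau1_hat N Nv1 Ncv2 Ncc Y1 Y2)
      = measure_pmf.variance (sw_design N Nv1 Ncv2) X"
    using sizes(3) decomp by (rule variance_sw_design_cong)
  show "measure_pmf.expectation (sw_design N Nv1 Ncv2) (tau1_hat N Nv1 Ncv2 Ncc Y1 Y2) = \<tau>"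
    using expectation_sw_design_contrast[OF sizes(3) centered, of \<tau>] unfolding expectation_eq X_def .
  have "measure_pmf.variance (sw_design N Nv1 Ncv2) (tau1_hat N Nv1 Ncv2 Ncc Y1 Y2)
      = (\<Sum>i<N. real Ncv2 * (real N - real Ncv2) * (a' i / Ncv2 + d' i / Ncc)\<^sup>2
           + 2 * real Nv1 * real Ncv2 * ((a' i / Ncv2 + d' i / Ncc) * (b' i / Nv1 - d' i / Ncc))
           + real Nv1 * (real N - real Nv1) * (b' i / Nv1 - d' i / Ncc)\<^sup>2) / (real N * (real N - 1))"
    unfolding variance_eq X_def by (rule variance_sw_design_contrast[OF pos(2) sizes(2) centered])
  also have "\<dots> = 1 / real Ncv2 * S2 N a + 1 / real Nv1 * S2 N b + 1 / real Ncc * S2 N d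
        - 1 / real N * (1 / (real N - 1)) * (\<Sum>i<N. (a i - b i - d i - \<tau>)\<^sup>2)"
    unfolding contrast_variance_eq_neyman[OF pos sum] S2_eq_centered \<tau>_def a'_def b'_def d'_def
    by (simp add: algebra_simps)
  finally show "measure_pmf.variance (sw_design N Nv1 Ncv2) (tau1_hat N Nv1 Ncv2 Ncc Y1 Y2)
      = 1 / real Ncv2 * S2 N a + 1 / real Nv1 * S2 N b + 1 / real Ncc * S2 N d
        - 1 / real N * (1 / (real N - 1)) * (\<Sum>i<N. (a i - b i - d i - \<tau>)\<^sup>2)" .
qed

theorem theorem1:
  fixes N Nv1 Ncv2 Ncc :: nat
    and Y1 :: "nat \<Rightarrow> trt \<Rightarrow> real"
    and Y2 :: "nat \<Rightarrow> trt \<Rightarrow> trt \<Rightarrow> real"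
  assumes pos: "Nv1 > 0" "Ncv2 > 0" "Ncc > 0"
    and sum: "Nv1 + Ncv2 + Ncc = N"
    and tice: "\<And>i v. i < N \<Longrightarrow> v \<in> {V1, V2} \<Longrightarrow>
                 Y2 i C v - Y2 i C C = Y1 i v - Y1 i C"
  shows "measure_pmf.expectation (sw_design N Nv1 Ncv2) (tau1_hat N Nv1 Ncv2 Ncc Y1 Y2)
           = tau1 N Y1 \<and>
         measure_pmf.variance (sw_design N Nv1 Ncv2) (tau1_hat N Nv1 Ncv2 Ncc Y1 Y2)
           = (1 / real Ncv2) * S2 N (\<lambda>i. Y2 i C V2)
           + (1 / real Nv1) * S2 N (\<lambda>i. Y1 i V1)
           + (1 / real Ncc) * S2 N (\<lambda>i. Y2 i C C - Y1 i C)
           - (1 / real N) * (1 / (real N - 1)) *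
               (\<Sum>i<N. (Y2 i C V2 - Y1 i V1 - (Y2 i C C - Y1 i C) - tau1 N Y1)\<^sup>2)"
proof -
  have "tau1 N Y1 = pop_mean N (\<lambda>i. Y2 i C V2) - pop_mean N (\<lambda>i. Y1 i V1)
                      - pop_mean N (\<lambda>i. Y2 i C C - Y1 i C)"
    using tice by (intro tau1_eq_pop_means) auto
  then show ?thesis
    using tau1_hat_moments[OF pos sum] by simp
qed

end
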